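(* Let $Q_{2^n}$ ($n\ge 3$) be the generalized quaternion group of order $2^n$. A non-identity element $g\in Q_{2^n}$ is an isolated vertex of the undeleted difference graph of $Q_{2^n}$ if and only if $g$ has order $2$.
   Context: $Q_{2^n}=\langle x,y\mid x^{2^{n-1}}=1,\ y^2=x^{2^{n-2}},\ y^{-1}xy=x^{-1}\rangle$. For a finite group $G$ with identity $e$: the intersection power graph $\mathcal{G}_I(G)$ has vertex set $G$, two distinct non-identity vertices $x,y$ being adjacent iff $\langle x\rangle\cap\langle y\rangle\neq\{e\}$, and $e$ being adjacent to every other vertex. The power graph $\mathcal{P}(G)$ has vertex set $G$, two distinct vertices being adjacent iff one is a power of the other. The undeleted difference graph of $G$ has vertex set $G$ and edge set $E(\mathcal{G}_I(G))\setminus E(\mathcal{P}(G))$. *)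

theory Defs
  imports "HOL-Algebra.Algebra"
begin

definition ipg_adj :: "('a, 'b) monoid_scheme \<Rightarrow> 'a \<Rightarrow> 'a \<Rightarrow> bool" where
  "ipg_adj G a b \<longleftrightarrow> a \<in> carrier G \<and> b \<in> carrier G \<and> a \<noteq> b \<and>
     (a = \<one>\<^bsub>G\<^esub> \<or> b = \<one>\<^bsub>G\<^esub> \<or>
      generate G {a} \<inter> generate G {b} \<noteq> {\<one>\<^bsub>G\<^esub>})"

definition power_adj :: "('a, 'b) monoid_scheme \<Rightarrow> 'a \<Rightarrow> 'a \<Rightarrow> bool" where
  "power_adj G a b \<longleftrightarrow> a \<in> carrier G \<and> b \<in> carrier G \<and> a \<noteq> b \<and>
     (\<exists>k::int. a = b [^]\<^bsub>G\<^esub> k \<or> b = a [^]\<^bsub>G\<^esub> k)"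

definition diff_adj :: "('a, 'b) monoid_scheme \<Rightarrow> 'a \<Rightarrow> 'a \<Rightarrow> bool" where
  "diff_adj G a b \<longleftrightarrow> ipg_adj G a b \<and> \<not> power_adj G a b"

definition diff_isolated :: "('a, 'b) monoid_scheme \<Rightarrow> 'a \<Rightarrow> bool" where
  "diff_isolated G g \<longleftrightarrow> g \<in> carrier G \<and> (\<forall>h \<in> carrier G. \<not> diff_adj G g h)"

end

theory Submission
  imports Defs
begin

text \<open>
  G is the union of the cyclic subgroup H = \<langle>x\<rangle> of index 2 and the coset H y, and every
  element a y of that coset squares to z = x^(2^(n-2)). Hence z is the only element of order 2,
  and in a 2-group this means that z is a power of every non-identity element.
  Consequently z is adjacent in the power graph to every other vertex and is isolated in the
  difference graph. Any other non-identity g meets y (if g \<in> H) or x (if g \<in> H y) in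
  \<langle>z\<rangle>, while neither of the two is a power of the other: a power commutes with its base,
  but an element of H commuting with an element of H y has order at most 2.
\<close>

lemma (in group) ord_eq_2_iff:
  assumes "g \<in> carrier G"
  shows "ord g = 2 \<longleftrightarrow> g \<noteq> \<one> \<and> g \<otimes> g = \<one>"
proof -
  have sq: "g [^] (2::nat) = g \<otimes> g"
    using assms by (simp add: numeral_2_eq_2)
  have "ord g = 2 \<longleftrightarrow> ord g dvd 2 \<and> ord g \<noteq> 1"
    using prime_nat_iff[of 2] by auto
  also have "\<dots> \<longleftrightarrow> g \<noteq> \<one> \<and> g \<otimes> g = \<one>"
    using assms ord_eq_1[OF assms] by (auto simp flip: sq pow_eq_id)
  finally show ?thesis .
qed

lemma (in group) int_pow_commute:
  assumes "g \<in> carrier G"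
  shows "g \<otimes> g [^] (k::int) = g [^] k \<otimes> g"
  using int_pow_mult[OF assms, of 1 k] int_pow_mult[OF assms, of k 1] assms
  by (simp add: add.commute)

lemma (in group) cyclic_subgroup_unique_ord_2:
  assumes x: "x \<in> carrier G" and ord_x: "ord x = 2 * N"
    and w: "w \<in> generate G {x}" and ord_w: "ord w = 2"
  shows "w = x [^] N"
proof -
  obtain i :: int where i: "w = x [^] i"
    using w generate_pow[OF x] by auto
  have "x [^] (i * 2) = \<one>"
    using ord_w pow_ord_eq_1[of w] x by (simp add: i int_pow_pow flip: int_pow_int)
  then have "2 * int N dvd i * 2"
    using int_pow_eq_id[OF x] ord_x by simp
  then obtain m where m: "i = int N * m"
    by (auto elim: dvdE)
  have "\<not> 2 * int N dvd i"
    using ord_w ord_eq_2_iff[of w] int_pow_eq_id[OF x, of i] x ord_x by (simp add: i)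
  then have "odd m"
    using m by auto
  then obtain q where "m = 2 * q + 1"
    by (auto elim: oddE)
  then have "2 * int N dvd int N - i"
    using m by (simp add: algebra_simps)
  then show ?thesis
    using int_pow_eq[OF x, of i "int N"] ord_x by (simp add: i int_pow_int)
qed

lemma (in group) unique_ord_2_in_every_cyclic_subgroup:
  assumes order: "order G = 2 ^ n"
    and unique: "\<And>w. w \<in> carrier G \<Longrightarrow> ord w = 2 \<Longrightarrow> w = z"
    and h: "h \<in> carrier G" "h \<noteq> \<one>"
  shows "z \<in> generate G {h}"
proof -
  obtain a where a: "ord h = 2 ^ a"
    using ord_dvd_group_order[OF h(1)] order by (auto simp: divides_primepow_nat)
  then obtain b where b: "a = Suc b"
    using h ord_eq_1 by (cases a) auto
  have "ord (h [^] (2::nat) ^ b) = 2"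
    using ord_pow[OF h(1), of "2 ^ b"] a b by simp
  then have "h [^] (2::nat) ^ b = z"
    using unique h(1) by simp
  then have "z = h [^] int (2 ^ b)"
    by (simp only: int_pow_int)
  then show ?thesis
    using generate_pow[OF h(1)] by blast
qed

section \<open>The undeleted difference graph\<close>

lemma diff_isolated_if_in_every_cyclic_subgroup:
  fixes G (structure)
  assumes "group G" and z: "z \<in> carrier G"
    and in_cyclic: "\<And>h. h \<in> carrier G \<Longrightarrow> h \<noteq> \<one> \<Longrightarrow> z \<in> generate G {h}"
  shows "diff_isolated G z"
proof -
  interpret group G by fact
  have "power_adj G z h" if "h \<in> carrier G" "h \<noteq> z" for h
  proof (cases "h = \<one>")
    case True
    then have "h = z [^] (0::int)" by simp
    then show ?thesis unfolding power_adj_def using z that by blast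
  next
    case False
    then show ?thesis
      using in_cyclic[OF that(1)] generate_pow[OF that(1)] z that unfolding power_adj_def by blast
  qed
  then show ?thesis
    unfolding diff_isolated_def diff_adj_def ipg_adj_def using z by blast
qed

lemma diff_adjI:
  fixes G (structure)
  assumes "group G" and g: "g \<in> carrier G" and h: "h \<in> carrier G"
    and "z \<noteq> \<one>" "z \<in> generate G {g}" "z \<in> generate G {h}"
    and "g \<notin> generate G {h}" "h \<notin> generate G {g}"
  shows "diff_adj G g h"
proof -
  interpret group G by fact
  have "g \<noteq> h"
    using assms generate.incl[of g "{g}" G] by blast
  moreover have "\<not> (\<exists>k::int. g = h [^] k \<or> h = g [^] k)"
    using assms generate_pow[OF g] generate_pow[OF h] by blast
  ultimately show ?thesis
    using assms unfolding diff_adj_def ipg_adj_def power_adj_def by blast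
qed

section \<open>Generalized quaternion groups\<close>

locale generalized_quaternion = group G for G (structure) +
  fixes n :: nat and x y :: 'a
  assumes n_ge_3: "n \<ge> 3"
    and finite_carrier: "finite (carrier G)"
    and order_eq: "order G = 2 ^ n"
    and x_closed: "x \<in> carrier G" and y_closed: "y \<in> carrier G"
    and generate_x_y: "generate G {x, y} = carrier G"
    and x_pow: "x [^] ((2::nat) ^ (n - 1)) = \<one>"
    and y_square: "y [^] (2::nat) = x [^] ((2::nat) ^ (n - 2))"
    and y_conj_x: "inv y \<otimes> x \<otimes> y = inv x"
begin

abbreviation H :: "'a set" where "H \<equiv> generate G {x}"

definition z :: 'a where "z = x [^] ((2::nat) ^ (n - 2))"

lemma H_subgroup: "subgroup H G"
  using generate_is_subgroup x_closed by simp

lemma H_closed: "a \<in> H \<Longrightarrow> a \<in> carrier G"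
  using subgroup.mem_carrier[OF H_subgroup] .

lemma x_in_H: "x \<in> H"
  by (simp add: generate.incl)

lemma z_in_H: "z \<in> H"
  unfolding z_def using subgroup_int_pow_closed[OF H_subgroup x_in_H, of "int (2 ^ (n - 2))"]
  by (simp only: int_pow_int)

lemma H_commute: "a \<in> H \<Longrightarrow> b \<in> H \<Longrightarrow> a \<otimes> b = b \<otimes> a"
  unfolding generate_pow[OF x_closed] using x_closed
  by (auto simp flip: int_pow_mult simp: add.commute)

lemma y_square_eq_z: "y \<otimes> y = z"
  using y_square y_closed unfolding z_def by (simp add: numeral_2_eq_2)

lemma y_conj_H: "a \<in> H \<Longrightarrow> inv y \<otimes> a \<otimes> y = inv a"
proof -
  assume "a \<in> H"
  then obtain k :: int where k: "a = x [^] k"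
    using generate_pow[OF x_closed] by auto
  have cancel: "y \<otimes> (inv y \<otimes> c) = c" if "c \<in> carrier G" for c
    using that y_closed by (simp add: m_assoc[symmetric])
  have conj_hom: "(\<lambda>a. inv y \<otimes> a \<otimes> y) \<in> hom G G"
    unfolding hom_def using y_closed by (auto simp: m_assoc cancel)
  have "inv y \<otimes> a \<otimes> y = (inv y \<otimes> x \<otimes> y) [^] k"
    unfolding k using hom_int_pow[OF conj_hom x_closed is_group is_group] by simp
  also have "\<dots> = inv a"
    unfolding y_conj_x k by (rule int_pow_inv[OF x_closed])
  finally show ?thesis .
qed

lemma y_mult_H: "a \<in> H \<Longrightarrow> y \<otimes> a = inv a \<otimes> y"
proof -
  assume a: "a \<in> H"
  then have "inv y \<otimes> inv a \<otimes> y = a"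
    using y_conj_H[OF subgroup.m_inv_closed[OF H_subgroup a]] H_closed[OF a] by simp
  then have "y \<otimes> a = y \<otimes> (inv y \<otimes> inv a \<otimes> y)"
    by simp
  also have "\<dots> = inv a \<otimes> y"
    using H_closed[OF a] y_closed by (simp add: m_assoc[symmetric])
  finally show ?thesis .
qed

lemma mem_coset_y_iff: "g \<in> H #> y \<longleftrightarrow> (\<exists>a\<in>H. g = a \<otimes> y)"
  by (auto simp: r_coset_def)

lemma coset_mult_H:
  assumes a: "a \<in> H" and b: "b \<in> H"
  shows "(a \<otimes> y) \<otimes> b = (a \<otimes> inv b) \<otimes> y"
proof -
  have "(a \<otimes> y) \<otimes> b = a \<otimes> (y \<otimes> b)"
    using a b H_closed y_closed by (simp add: m_assoc)
  also have "\<dots> = (a \<otimes> inv b) \<otimes> y"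
    using a b H_closed y_closed by (simp add: y_mult_H[OF b] m_assoc)
  finally show ?thesis .
qed

lemma coset_mult_coset:
  assumes a: "a \<in> H" and b: "b \<in> H"
  shows "(a \<otimes> y) \<otimes> (b \<otimes> y) = (a \<otimes> inv b) \<otimes> z"
proof -
  have "(a \<otimes> y) \<otimes> (b \<otimes> y) = ((a \<otimes> y) \<otimes> b) \<otimes> y"
    using a b H_closed y_closed by (simp add: m_assoc)
  also have "\<dots> = (a \<otimes> inv b) \<otimes> (y \<otimes> y)"
    using a b H_closed y_closed by (simp add: coset_mult_H[OF a b] m_assoc)
  finally show ?thesis
    by (simp add: y_square_eq_z)
qed

lemma H_mult_coset:
  assumes "a \<in> H" "b \<in> H"
  shows "a \<otimes> (b \<otimes> y) = (a \<otimes> b) \<otimes> y"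
  using assms H_closed y_closed by (simp add: m_assoc)

lemma H_union_coset_mult_closed:
  assumes g: "g \<in> H \<union> (H #> y)" and h: "h \<in> H \<union> (H #> y)"
  shows "g \<otimes> h \<in> H \<union> (H #> y)"
proof -
  note closed = subgroup.m_closed[OF H_subgroup] subgroup.m_inv_closed[OF H_subgroup]
  have coset: "a \<otimes> y \<in> H #> y" if "a \<in> H" for a
    using that by (auto simp: mem_coset_y_iff)
  from g obtain a where a: "a \<in> H" and "g = a \<or> g = a \<otimes> y"
    by (auto simp: mem_coset_y_iff)
  moreover from h obtain b where b: "b \<in> H" and "h = b \<or> h = b \<otimes> y"
    by (auto simp: mem_coset_y_iff)
  moreover have "a \<otimes> b \<in> H" "a \<otimes> (b \<otimes> y) \<in> H #> y"
    "(a \<otimes> y) \<otimes> b \<in> H #> y" "(a \<otimes> y) \<otimes> (b \<otimes> y) \<in> H"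
    using a b closed coset z_in_H
    by (simp_all add: H_mult_coset[OF a b] coset_mult_H[OF a b] coset_mult_coset[OF a b])
  ultimately show ?thesis
    by auto
qed

lemma carrier_subset_H_union_coset: "carrier G \<subseteq> H \<union> (H #> y)"
proof
  fix g assume "g \<in> carrier G"
  then have "g \<in> generate G {x, y}"
    using generate_x_y by simp
  then show "g \<in> H \<union> (H #> y)"
  proof (induction rule: generate.induct)
    case one
    show ?case using subgroup.one_closed[OF H_subgroup] by simp
  next
    case (incl h)
    then show ?case using x_in_H rcos_self[OF y_closed H_subgroup] by auto
  next
    case (inv h)
    have "inv y = inv z \<otimes> y"
      using y_square_eq_z[symmetric] z_in_H H_closed y_closed
      by (intro inv_equality) (simp_all add: m_assoc)
    then have "inv y \<in> H #> y"
      using subgroup.m_inv_closed[OF H_subgroup z_in_H] by (auto simp: mem_coset_y_iff)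
    then show ?case
      using inv subgroup.m_inv_closed[OF H_subgroup x_in_H] by auto
  next
    case (eng g h)
    show ?case by (rule H_union_coset_mult_closed[OF eng.IH])
  qed
qed

lemma two_pow_n_minus_1: "(2::nat) ^ (n - 1) = 2 * 2 ^ (n - 2)"
proof -
  have "n - 1 = Suc (n - 2)"
    using n_ge_3 by simp
  then show ?thesis
    by simp
qed

lemma ord_x: "ord x = 2 * 2 ^ (n - 2)"
proof -
  have finite_H: "finite H"
    using finite_subset[OF subgroup.subset[OF H_subgroup] finite_carrier] .
  have "2 ^ n = card (carrier G)"
    using order_eq by (simp add: order_def)
  also have "\<dots> \<le> card (H \<union> (H #> y))"
    using carrier_subset_H_union_coset finite_H
    by (intro card_mono) (auto simp: r_coset_def)
  also have "\<dots> \<le> card H + card (H #> y)"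
    by (rule card_Un_le)
  also have "card (H #> y) = card H"
    using card_rcosets_equal[OF rcosetsI] subgroup.subset[OF H_subgroup] y_closed by simp
  also have "card H = ord x"
    using generate_pow_card[OF x_closed] by simp
  finally have "2 ^ n \<le> 2 * ord x"
    by simp
  moreover have "ord x dvd 2 * 2 ^ (n - 2)"
    using x_pow two_pow_n_minus_1 pow_eq_id x_closed by metis
  moreover have "(2::nat) ^ n = 2 * (2 * 2 ^ (n - 2))"
    using n_ge_3 two_pow_n_minus_1 by (cases n) auto
  ultimately show ?thesis
    using dvd_imp_le[of "ord x" "2 * 2 ^ (n - 2)"] by (simp add: dvd_antisym)
qed

lemma x_square_ne_one: "x \<otimes> x \<noteq> \<one>"
proof
  assume "x \<otimes> x = \<one>"
  then have "x [^] (2::nat) = \<one>"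
    using x_closed by (simp add: numeral_2_eq_2)
  then have "ord x dvd 2"
    using pow_eq_id[OF x_closed] by blast
  moreover have "(2::nat) \<le> 2 ^ (n - 2)"
    using n_ge_3 self_le_power[of 2 "n - 2"] by simp
  ultimately show False
    using dvd_imp_le[of "ord x" 2] by (simp add: ord_x)
qed

lemma ord_z: "ord z = 2"
  unfolding z_def using ord_pow[OF x_closed, of "2 ^ (n - 2)"] by (simp add: ord_x)

lemma z_ne_one: "z \<noteq> \<one>"
  using ord_z by auto

lemma square_eq_one_if_commutes_with_coset:
  assumes a: "a \<in> H" and b: "b \<in> H" and comm: "b \<otimes> (a \<otimes> y) = (a \<otimes> y) \<otimes> b"
  shows "b \<otimes> b = \<one>"
proof -
  have "(a \<otimes> b) \<otimes> y = (a \<otimes> inv b) \<otimes> y"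
    using comm H_mult_coset[OF b a] coset_mult_H[OF a b] H_commute[OF a b] by simp
  then have "b = inv b"
    using a b H_closed y_closed by simp
  then show ?thesis
    using b H_closed by (metis r_inv)
qed

lemma square_eq_one_if_commutes_with_y:
  assumes "b \<in> H" "b \<otimes> y = y \<otimes> b"
  shows "b \<otimes> b = \<one>"
  using square_eq_one_if_commutes_with_coset[OF subgroup.one_closed[OF H_subgroup]] assms y_closed
  by simp

lemma y_notin_H: "y \<notin> H"
proof
  assume "y \<in> H"
  then have "x \<otimes> x = \<one>"
    using square_eq_one_if_commutes_with_y[OF x_in_H] H_commute[OF x_in_H] by simp
  then show False
    using x_square_ne_one by simp
qed

lemma mult_y_notin_H: "a \<in> H \<Longrightarrow> a \<otimes> y \<notin> H"
  using y_notin_H H_closed y_closed subgroup.m_closed[OF H_subgroup]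
    subgroup.m_inv_closed[OF H_subgroup]
  by (metis inv_solve_left')

lemma ord_eq_2_imp_eq_z:
  assumes w: "w \<in> carrier G" and ord_w: "ord w = 2"
  shows "w = z"
proof -
  have "w \<notin> H #> y"
  proof
    assume "w \<in> H #> y"
    then obtain a where a: "a \<in> H" and "w = a \<otimes> y"
      by (auto simp: mem_coset_y_iff)
    then have "w \<otimes> w = z"
      using coset_mult_coset[OF a a] a H_closed z_in_H by simp
    then show False
      using ord_w ord_z ord_eq_2_iff w H_closed[OF z_in_H] by metis
  qed
  then have "w \<in> H"
    using w carrier_subset_H_union_coset by blast
  then show ?thesis
    unfolding z_def using cyclic_subgroup_unique_ord_2 x_closed ord_x ord_w by blast
qed

lemma z_in_cyclic_subgroup:
  assumes "h \<in> carrier G" "h \<noteq> \<one>"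
  shows "z \<in> generate G {h}"
  using unique_ord_2_in_every_cyclic_subgroup[OF order_eq ord_eq_2_imp_eq_z assms] .

lemma diff_adj_y:
  assumes g: "g \<in> H" "g \<noteq> \<one>" "g \<noteq> z"
  shows "diff_adj G g y"
proof -
  have g_closed: "g \<in> carrier G"
    using H_closed g(1) .
  have y_ne_one: "y \<noteq> \<one>"
    using y_notin_H subgroup.one_closed[OF H_subgroup] by blast
  have "g \<notin> generate G {y}"
  proof
    assume "g \<in> generate G {y}"
    then obtain k :: int where "g = y [^] k"
      using generate_pow[OF y_closed] by auto
    then have "g \<otimes> g = \<one>"
      using square_eq_one_if_commutes_with_y[OF g(1)] int_pow_commute[OF y_closed, of k] by simp
    then show False
      using g g_closed ord_eq_2_imp_eq_z ord_eq_2_iff by blast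
  qed
  moreover have "y \<notin> generate G {g}"
    using y_notin_H generate_subgroup_incl[OF _ H_subgroup, of "{g}"] g(1) by blast
  ultimately show ?thesis
    by (intro diff_adjI[OF is_group g_closed y_closed z_ne_one] z_in_cyclic_subgroup
        g_closed g(2) y_closed y_ne_one)
qed

lemma diff_adj_x:
  assumes a: "a \<in> H"
  shows "diff_adj G (a \<otimes> y) x"
proof -
  have g_closed: "a \<otimes> y \<in> carrier G"
    using H_closed a y_closed by simp
  have "x \<notin> generate G {a \<otimes> y}"
  proof
    assume "x \<in> generate G {a \<otimes> y}"
    then obtain k :: int where "x = (a \<otimes> y) [^] k"
      using generate_pow[OF g_closed] by auto
    then show False
      using square_eq_one_if_commutes_with_coset[OF a x_in_H] int_pow_commute[OF g_closed, of k]
        x_square_ne_one by simp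
  qed
  moreover have "a \<otimes> y \<noteq> \<one>"
    using mult_y_notin_H[OF a] subgroup.one_closed[OF H_subgroup] by auto
  moreover have "x \<noteq> \<one>"
    using x_square_ne_one by auto
  ultimately show ?thesis
    using mult_y_notin_H[OF a]
    by (intro diff_adjI[OF is_group g_closed x_closed z_ne_one] z_in_cyclic_subgroup
        g_closed x_closed) simp_all
qed

lemma not_diff_isolated:
  assumes "g \<in> carrier G" "g \<noteq> \<one>" "g \<noteq> z"
  shows "\<not> diff_isolated G g"
proof -
  have "g \<in> H \<union> (H #> y)"
    using assms carrier_subset_H_union_coset by blast
  then have "diff_adj G g y \<or> diff_adj G g x"
    using assms diff_adj_y diff_adj_x by (auto simp: mem_coset_y_iff)
  then show ?thesis
    unfolding diff_isolated_def using x_closed y_closed by blast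
qed

end

theorem lemma5p3:
  fixes G (structure) and n :: nat and x y g :: 'a
  assumes "n \<ge> 3"
    and "group G"
    and "finite (carrier G)"
    and "order G = 2 ^ n"
    and "x \<in> carrier G" and "y \<in> carrier G"
    and "generate G {x, y} = carrier G"
    and "x [^] ((2::nat) ^ (n - 1)) = \<one>"
    and "y [^] (2::nat) = x [^] ((2::nat) ^ (n - 2))"
    and "inv y \<otimes> x \<otimes> y = inv x"
    and "g \<in> carrier G" and "g \<noteq> \<one>"
  shows "diff_isolated G g \<longleftrightarrow> group.ord G g = 2"
proof -
  interpret generalized_quaternion G n x y
    using assms by (simp add: generalized_quaternion_def generalized_quaternion_axioms_def)
  have "diff_isolated G z"
    using diff_isolated_if_in_every_cyclic_subgroup[OF is_group H_closed[OF z_in_H]]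
      z_in_cyclic_subgroup by blast
  then show ?thesis
    using assms(11,12) not_diff_isolated ord_eq_2_imp_eq_z ord_z by metis
qed

end
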